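(* For every skew-symmetrizable seed datum $(P,Q)$ there exist skew-symmetrizable seed data $(P',Q')$ and $(P'',Q'')$ and integral linear morphisms $$(P,Q)\xrightarrow{\;A\;}(P',Q')\xleftarrow{\;B\;}(P'',Q'')$$ such that $A$ is injective, $B$ is surjective, and $(P'',Q'')$ is saturated-injective.
   Context: Seed data. A skew-symmetrizable seed datum $(P,Q)$ of rank $r$ consists of: mutually dual finite-rank lattices $M,N$ (pairing $m\cdot n$); homomorphisms $P:\mathbb Z^r\to M$, $Q:\mathbb Z^r\to N$ with $Qe_i\neq0$ for each standard basis vector $e_i$; a lattice $N^\bullet$ such that $N,N^\bullet$ are finite-index sublattices of a common lattice, with dual lattice $M^\bullet$; a diagonal matrix $D=\operatorname{diag}(d_1,\dots,d_r)$, $d_i\in\mathbb Q_{>0}$; and a homomorphism $Q^\bullet:\mathbb Z^r\to N^\bullet$ with $Q=Q^\bullet\circ D$ (maps extended $\mathbb Q$-linearly), such that $B^\bullet_{ij}=(Pe_j)\cdot(Q^\bullet e_i)$ is skew-symmetric. Linear morphisms. For seed data $(P,Q)$ (lattices $M,N$) and $(P',Q')$ (lattices $M',N'$) of the same rank $r$ and same $D$, an integral linear morphism is a homomorphism $A:M\to M'$ with $AP=P'$ and $A^\top Q'=Q$, where $A^\top:N'\to N$ is the adjoint. A homomorphism of lattices is saturated if its image is a saturated sublattice (the quotient by it is torsion-free). $(P,Q)$ is saturated-injective if $P$ and $Q$ are both saturated injections. *)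

theory Defs
  imports "Jordan_Normal_Form.Matrix"
begin

text \<open>A lattice M of rank m is modelled as int^m (int vec of dimension m), with
N = int^m its dual via the standard dot product. Homomorphisms Z^r -> M, Z^r -> N are
m x r integer matrices (columns = images of standard basis vectors). The lattice N-bullet
is modelled as a subgroup of Q^m (= Q tensor N) which, together with N = Z^m, sits with
finite index inside a common lattice: concretely, c Z^m is contained in N-bullet, which is
contained in (1/c) Z^m for some positive integer c.\<close>

record seed =
  sd_dim :: nat
  sd_P :: "int mat"
  sd_Q :: "int mat"
  sd_Nb :: "rat vec set"

definition rat_of_ivec :: "int vec \<Rightarrow> rat vec" where
  "rat_of_ivec v = map_vec of_int v"

definition integral_rvec :: "rat vec \<Rightarrow> bool" where
  "integral_rvec w \<longleftrightarrow> (\<forall>k<dim_vec w. w $ k \<in> \<int>)"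

definition commensurable_lattice :: "nat \<Rightarrow> rat vec set \<Rightarrow> bool" where
  "commensurable_lattice m L \<longleftrightarrow>
     L \<subseteq> carrier_vec m \<and> 0\<^sub>v m \<in> L \<and>
     (\<forall>x\<in>L. \<forall>y\<in>L. x + y \<in> L \<and> - x \<in> L) \<and>
     (\<exists>c::int. c > 0 \<and>
        (\<forall>v\<in>carrier_vec m. of_int c \<cdot>\<^sub>v rat_of_ivec v \<in> L) \<and>
        (\<forall>w\<in>L. integral_rvec (of_int c \<cdot>\<^sub>v w)))"

text \<open>Q-bullet e_i = (1/d_i) Q e_i, as forced by Q = Q-bullet o D.\<close>
definition Qbul_col :: "rat list \<Rightarrow> seed \<Rightarrow> nat \<Rightarrow> rat vec" where
  "Qbul_col D S i = (1 / D ! i) \<cdot>\<^sub>v rat_of_ivec (col (sd_Q S) i)"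

definition Bbul :: "rat list \<Rightarrow> seed \<Rightarrow> nat \<Rightarrow> nat \<Rightarrow> rat" where
  "Bbul D S i j = rat_of_ivec (col (sd_P S) j) \<bullet> Qbul_col D S i"

definition seed_datum :: "nat \<Rightarrow> rat list \<Rightarrow> seed \<Rightarrow> bool" where
  "seed_datum r D S \<longleftrightarrow>
     length D = r \<and> (\<forall>i<r. D ! i > 0) \<and>
     sd_P S \<in> carrier_mat (sd_dim S) r \<and> sd_Q S \<in> carrier_mat (sd_dim S) r \<and>
     (\<forall>i<r. col (sd_Q S) i \<noteq> 0\<^sub>v (sd_dim S)) \<and>
     commensurable_lattice (sd_dim S) (sd_Nb S) \<and>
     (\<forall>i<r. Qbul_col D S i \<in> sd_Nb S) \<and>
     (\<forall>i<r. \<forall>j<r. Bbul D S i j = - Bbul D S j i)"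

definition int_lin_morphism :: "seed \<Rightarrow> seed \<Rightarrow> int mat \<Rightarrow> bool" where
  "int_lin_morphism S S' A \<longleftrightarrow>
     A \<in> carrier_mat (sd_dim S') (sd_dim S) \<and>
     A * sd_P S = sd_P S' \<and> transpose_mat A * sd_Q S' = sd_Q S"

definition mat_injective :: "int mat \<Rightarrow> bool" where
  "mat_injective A \<longleftrightarrow>
     (\<forall>v\<in>carrier_vec (dim_col A). \<forall>w\<in>carrier_vec (dim_col A). A *\<^sub>v v = A *\<^sub>v w \<longrightarrow> v = w)"

definition mat_surjective :: "int mat \<Rightarrow> bool" where
  "mat_surjective A \<longleftrightarrow>
     (\<forall>w\<in>carrier_vec (dim_row A). \<exists>v\<in>carrier_vec (dim_col A). A *\<^sub>v v = w)"

definition mat_saturated :: "int mat \<Rightarrow> bool" where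
  "mat_saturated A \<longleftrightarrow>
     (\<forall>w\<in>carrier_vec (dim_row A). \<forall>k::int. k \<noteq> 0 \<longrightarrow>
        (\<exists>v\<in>carrier_vec (dim_col A). A *\<^sub>v v = k \<cdot>\<^sub>v w) \<longrightarrow>
        (\<exists>v\<in>carrier_vec (dim_col A). A *\<^sub>v v = w))"

definition saturated_injective :: "seed \<Rightarrow> bool" where
  "saturated_injective S \<longleftrightarrow>
     mat_injective (sd_P S) \<and> mat_saturated (sd_P S) \<and>
     mat_injective (sd_Q S) \<and> mat_saturated (sd_Q S)"

end

theory Submission
  imports Defs
begin

(* Embed M into M' = M \<oplus> Z^r by
   A = [1; 0], with P' = [P; 0] and Q' = [Q; 1], so that Q' has an integral left inverse.
   Then cover M' by M'' = Z^r \<oplus> M' via B = [P' 1], with P'' = [1; 0] and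
   Q'' = B^T Q' = [P'^T Q'; Q']. Both P'' and Q'' have integral left inverses, and an integer
   matrix with an integral left inverse is a saturated injection. Morphisms preserve the
   pairing P^T Q, hence the matrix B-bullet, so the new data are again skew-symmetrizable seed
   data once N-bullet is taken to be (1/c) Z^n for a common denominator c of the 1/d_i. *)

lemma mult_mat_vec_smult:
  fixes A :: "'a :: comm_semiring_0 mat"
  assumes "A \<in> carrier_mat nr nc" and "v \<in> carrier_vec nc"
  shows "A *\<^sub>v (k \<cdot>\<^sub>v v) = k \<cdot>\<^sub>v (A *\<^sub>v v)"
  using assms by (intro eq_vecI) auto

lemma smult_vec_cancel:
  fixes k :: "'a :: idom"
  assumes "k \<noteq> 0" and "k \<cdot>\<^sub>v v = k \<cdot>\<^sub>v w"
  shows "v = w"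
  using assms by (auto simp: vec_eq_iff)

lemma col_append_rows:
  assumes "A \<in> carrier_mat n1 nc" and "B \<in> carrier_mat n2 nc" and "j < nc"
  shows "col (A @\<^sub>r B) j = col A j @\<^sub>v col B j"
  using assms unfolding append_rows_def by (intro col_four_block_mat) auto

lemma append_rows_mult:
  assumes A: "A \<in> carrier_mat n1 n" and B: "B \<in> carrier_mat n2 n" and C: "C \<in> carrier_mat n nc"
  shows "(A @\<^sub>r B) * C = (A * C) @\<^sub>r (B * C)"
proof (rule mat_col_eqI)
  fix j assume "j < dim_col ((A * C) @\<^sub>r (B * C))"
  then have j: "j < nc" using A B C by (simp add: append_rows_def)
  have "col ((A @\<^sub>r B) * C) j = (A @\<^sub>r B) *\<^sub>v col C j"
    using A B C j by (intro col_mult2) auto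
  also have "\<dots> = (A *\<^sub>v col C j) @\<^sub>v (B *\<^sub>v col C j)"
    using A B C j by (intro mat_mult_append) auto
  also have "\<dots> = col ((A * C) @\<^sub>r (B * C)) j"
    using A B C j by (subst col_append_rows) auto
  finally show "col ((A @\<^sub>r B) * C) j = col ((A * C) @\<^sub>r (B * C)) j" .
qed (use A B C in \<open>auto simp: append_rows_def\<close>)

lemma transpose_append_rows_mult:
  fixes A :: "'a :: comm_semiring_0 mat"
  assumes A: "A \<in> carrier_mat n1 r" and B: "B \<in> carrier_mat n2 r"
    and C: "C \<in> carrier_mat n1 s" and D: "D \<in> carrier_mat n2 s"
  shows "transpose_mat (A @\<^sub>r B) * (C @\<^sub>r D) = transpose_mat A * C + transpose_mat B * D"
proof (rule eq_matI)
  fix i j assume "i < dim_row (transpose_mat A * C + transpose_mat B * D)"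
    and "j < dim_col (transpose_mat A * C + transpose_mat B * D)"
  then have i: "i < r" and j: "j < s" using A B C D by auto
  have "(transpose_mat (A @\<^sub>r B) * (C @\<^sub>r D)) $$ (i, j) = col (A @\<^sub>r B) i \<bullet> col (C @\<^sub>r D) j"
    using A B C D i j by (simp add: append_rows_def)
  also have "\<dots> = (col A i @\<^sub>v col B i) \<bullet> (col C j @\<^sub>v col D j)"
    using A B C D i j by (simp add: col_append_rows)
  also have "\<dots> = col A i \<bullet> col C j + col B i \<bullet> col D j"
    using A B C D by (intro scalar_prod_append[of _ n1 _ n2]) auto
  also have "\<dots> = (transpose_mat A * C + transpose_mat B * D) $$ (i, j)"
    using A B C D i j by simp
  finally show "(transpose_mat (A @\<^sub>r B) * (C @\<^sub>r D)) $$ (i, j) = \<dots>" .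
qed (use A B C D in \<open>auto simp: append_rows_def\<close>)

definition left_invertible :: "'a :: semiring_1 mat \<Rightarrow> bool" where
  "left_invertible M \<longleftrightarrow> (\<exists>L \<in> carrier_mat (dim_col M) (dim_row M). L * M = 1\<^sub>m (dim_col M))"

lemma left_invertible_one: "left_invertible (1\<^sub>m n)"
  unfolding left_invertible_def by (intro bexI[of _ "1\<^sub>m n"]) auto

lemma left_invertible_append_rows_top:
  fixes X :: "'a :: comm_semiring_1 mat"
  assumes X: "X \<in> carrier_mat n1 r" and Y: "Y \<in> carrier_mat n2 r" and "left_invertible X"
  shows "left_invertible (X @\<^sub>r Y)"
proof -
  obtain L where L: "L \<in> carrier_mat r n1" "L * X = 1\<^sub>m r"
    using assms unfolding left_invertible_def by auto
  have "transpose_mat (transpose_mat L @\<^sub>r 0\<^sub>m n2 r) * (X @\<^sub>r Y) = 1\<^sub>m r"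
    using X Y L by (simp add: transpose_append_rows_mult[of _ n1 r _ n2 _ r])
  moreover have "X @\<^sub>r Y \<in> carrier_mat (n1 + n2) r" using X Y by auto
  ultimately show ?thesis
    using L unfolding left_invertible_def
    by (intro bexI[of _ "transpose_mat (transpose_mat L @\<^sub>r 0\<^sub>m n2 r)"]) (auto simp: carrier_matD)
qed

lemma left_invertible_append_rows_bottom:
  fixes X :: "'a :: comm_semiring_1 mat"
  assumes X: "X \<in> carrier_mat n1 r" and Y: "Y \<in> carrier_mat n2 r" and "left_invertible Y"
  shows "left_invertible (X @\<^sub>r Y)"
proof -
  obtain L where L: "L \<in> carrier_mat r n2" "L * Y = 1\<^sub>m r"
    using assms unfolding left_invertible_def by auto
  have "transpose_mat (0\<^sub>m n1 r @\<^sub>r transpose_mat L) * (X @\<^sub>r Y) = 1\<^sub>m r"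
    using X Y L by (simp add: transpose_append_rows_mult[of _ n1 r _ n2 _ r])
  moreover have "X @\<^sub>r Y \<in> carrier_mat (n1 + n2) r" using X Y by auto
  ultimately show ?thesis
    using L unfolding left_invertible_def
    by (intro bexI[of _ "transpose_mat (0\<^sub>m n1 r @\<^sub>r transpose_mat L)"]) (auto simp: carrier_matD)
qed

lemma left_invertible_col_nonzero:
  assumes "left_invertible M" and j: "j < dim_col M"
  shows "col M j \<noteq> 0\<^sub>v (dim_row M)"
proof
  obtain L where L: "L \<in> carrier_mat (dim_col M) (dim_row M)" "L * M = 1\<^sub>m (dim_col M)"
    using assms unfolding left_invertible_def by auto
  assume "col M j = 0\<^sub>v (dim_row M)"
  then have "col (L * M) j = 0\<^sub>v (dim_col M)"
    using L j by (subst col_mult2[of _ _ "dim_row M" _ "dim_col M"]) auto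
  then show False
    using L j by (metis col_one index_unit_vec(2) index_zero_vec(1) zero_neq_one)
qed

lemma left_invertible_imp_injective_saturated:
  fixes M :: "int mat"
  assumes "left_invertible M"
  shows "mat_injective M \<and> mat_saturated M"
proof -
  obtain L where L: "L \<in> carrier_mat (dim_col M) (dim_row M)" "L * M = 1\<^sub>m (dim_col M)"
    using assms unfolding left_invertible_def by auto
  have retract: "L *\<^sub>v (M *\<^sub>v v) = v" if "v \<in> carrier_vec (dim_col M)" for v
    using L that by (metis assoc_mult_mat_vec carrier_mat_triv one_mult_mat_vec)
  have "mat_injective M"
    unfolding mat_injective_def by (metis retract)
  moreover have "mat_saturated M"
    unfolding mat_saturated_def
  proof (intro ballI allI impI)
    fix w and k :: int
    assume w: "w \<in> carrier_vec (dim_row M)" and k: "k \<noteq> 0"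
      and "\<exists>v\<in>carrier_vec (dim_col M). M *\<^sub>v v = k \<cdot>\<^sub>v w"
    then obtain v where v: "v \<in> carrier_vec (dim_col M)" and Mv: "M *\<^sub>v v = k \<cdot>\<^sub>v w" by blast
    define u where "u = L *\<^sub>v w"
    have u: "u \<in> carrier_vec (dim_col M)" using L unfolding u_def carrier_vec_def by auto
    have "k \<cdot>\<^sub>v u = v"
      using retract[OF v] L w by (simp add: u_def Mv mult_mat_vec_smult)
    then have "k \<cdot>\<^sub>v (M *\<^sub>v u) = k \<cdot>\<^sub>v w"
      using u Mv by (metis carrier_mat_triv mult_mat_vec_smult)
    then show "\<exists>u\<in>carrier_vec (dim_col M). M *\<^sub>v u = w"
      using u k smult_vec_cancel by blast
  qed
  ultimately show ?thesis ..
qed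

lemma right_invertible_imp_surjective:
  fixes B :: "int mat"
  assumes B: "B \<in> carrier_mat n k" and C: "C \<in> carrier_mat k n" and BC: "B * C = 1\<^sub>m n"
  shows "mat_surjective B"
  unfolding mat_surjective_def
proof
  fix w :: "int vec" assume "w \<in> carrier_vec (dim_row B)"
  then have "B *\<^sub>v (C *\<^sub>v w) = w"
    using B C BC by (metis assoc_mult_mat_vec carrier_matD(1) one_mult_mat_vec)
  then show "\<exists>v\<in>carrier_vec (dim_col B). B *\<^sub>v v = w"
    using B C unfolding carrier_vec_def by (intro bexI[of _ "C *\<^sub>v w"]) auto
qed

lemma morphism_preserves_pairing:
  fixes A :: "'a :: comm_semiring_1 mat"
  assumes A: "A \<in> carrier_mat n' n" and P: "P \<in> carrier_mat n r" and Q': "Q' \<in> carrier_mat n' s"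
    and AP: "A * P = P'" and AQ: "transpose_mat A * Q' = Q"
  shows "transpose_mat P' * Q' = transpose_mat P * Q"
proof -
  have "transpose_mat P' * Q' = (transpose_mat P * transpose_mat A) * Q'"
    using A P by (simp add: AP[symmetric] transpose_mult)
  also have "\<dots> = transpose_mat P * Q"
    using A P Q' by (simp add: AQ[symmetric] assoc_mult_mat[of _ r n _ n' _ s])
  finally show ?thesis .
qed

lemma Bbul_eq_pairing:
  assumes "sd_P S \<in> carrier_mat n r" and "sd_Q S \<in> carrier_mat n r" and "i < r" and "j < r"
  shows "Bbul D S i j = of_int ((transpose_mat (sd_P S) * sd_Q S) $$ (j, i)) / D ! i"
  using assms unfolding Bbul_def Qbul_col_def rat_of_ivec_def
  by (simp add: scalar_prod_def sum_divide_distrib)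

definition denominator_lattice :: "int \<Rightarrow> nat \<Rightarrow> rat vec set" where
  "denominator_lattice c n = {w \<in> carrier_vec n. integral_rvec (of_int c \<cdot>\<^sub>v w)}"

lemma commensurable_denominator_lattice:
  assumes "c > 0"
  shows "commensurable_lattice n (denominator_lattice c n)"
  unfolding commensurable_lattice_def
proof (intro conjI)
  show "\<exists>c'. c' > 0 \<and> (\<forall>v\<in>carrier_vec n. of_int c' \<cdot>\<^sub>v rat_of_ivec v \<in> denominator_lattice c n) \<and>
      (\<forall>w\<in>denominator_lattice c n. integral_rvec (of_int c' \<cdot>\<^sub>v w))"
    using assms unfolding denominator_lattice_def integral_rvec_def rat_of_ivec_def
    by (intro exI[of _ c]) auto
qed (auto simp: denominator_lattice_def integral_rvec_def distrib_left)

lemma smult_ivec_in_denominator_lattice: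
  assumes "of_int c * x \<in> \<int>" and "w \<in> carrier_vec n"
  shows "x \<cdot>\<^sub>v rat_of_ivec w \<in> denominator_lattice c n"
proof -
  have "of_int c * (x * of_int (w $ k)) \<in> \<int>" for k
    using assms(1) by (metis Ints_mult Ints_of_int mult.assoc)
  then show ?thesis
    using assms(2) unfolding denominator_lattice_def integral_rvec_def rat_of_ivec_def by auto
qed

lemma common_denominator:
  assumes "finite X"
  shows "\<exists>c::int. c > 0 \<and> (\<forall>x\<in>X. of_int c * (x::rat) \<in> \<int>)"
proof (intro exI conjI ballI)
  let ?den = "\<lambda>x. snd (quotient_of x)"
  show "(\<Prod>x\<in>X. ?den x) > 0"
    by (intro prod_pos) (metis prod.collapse quotient_of_denom_pos)
  fix x assume x: "x \<in> X"
  obtain a b where ab: "quotient_of x = (a, b)" by fastforce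
  have "of_int (\<Prod>x\<in>X. ?den x) * x = of_int (\<Prod>y\<in>X - {x}. ?den y) * (of_int b * x)"
    using assms x ab by (simp add: prod.remove)
  also have "of_int b * x = of_int a"
    using quotient_of_denom_pos[OF ab] quotient_of_div[OF ab] by simp
  finally show "of_int (\<Prod>x\<in>X. ?den x) * x \<in> \<int>" by (metis Ints_mult Ints_of_int)
qed

lemma exists_seed_datum_same_pairing:
  assumes S: "seed_datum r D S"
    and P: "P \<in> carrier_mat n r" and Q: "Q \<in> carrier_mat n r"
    and Q_col: "\<forall>i<r. col Q i \<noteq> 0\<^sub>v n"
    and pairing: "transpose_mat P * Q = transpose_mat (sd_P S) * sd_Q S"
  shows "\<exists>Nb. seed_datum r D \<lparr>sd_dim = n, sd_P = P, sd_Q = Q, sd_Nb = Nb\<rparr>"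
proof -
  have D: "length D = r" "\<forall>i<r. D ! i > 0"
    and PS: "sd_P S \<in> carrier_mat (sd_dim S) r" and QS: "sd_Q S \<in> carrier_mat (sd_dim S) r"
    and skew: "\<forall>i<r. \<forall>j<r. Bbul D S i j = - Bbul D S j i"
    using S unfolding seed_datum_def by blast+
  obtain c :: int where c: "c > 0" "\<forall>x \<in> inverse ` set D. of_int c * x \<in> \<int>"
    using common_denominator[of "inverse ` set D"] by auto
  define S' where "S' = \<lparr>sd_dim = n, sd_P = P, sd_Q = Q, sd_Nb = denominator_lattice c n\<rparr>"
  have sel: "sd_dim S' = n" "sd_P S' = P" "sd_Q S' = Q" "sd_Nb S' = denominator_lattice c n"
    by (simp_all add: S'_def)
  have same_Bbul: "Bbul D S' i j = Bbul D S i j" if "i < r" "j < r" for i j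
    using Bbul_eq_pairing[of S' n r, OF _ _ that] Bbul_eq_pairing[OF PS QS that] P Q pairing
    by (simp add: sel)
  have "Bbul D S' i j = - Bbul D S' j i" if "i < r" "j < r" for i j
    using same_Bbul[OF that] same_Bbul[OF that(2,1)] skew[rule_format, OF that] by linarith
  moreover have "Qbul_col D S' i \<in> denominator_lattice c n" if "i < r" for i
  proof -
    have "of_int c * (1 / D ! i) \<in> \<int>"
      using c(2) D(1) that by (simp add: divide_inverse)
    then show ?thesis
      using Q that unfolding Qbul_col_def sel by (simp add: smult_ivec_in_denominator_lattice)
  qed
  ultimately have "seed_datum r D S'"
    unfolding seed_datum_def sel
    using D P Q Q_col commensurable_denominator_lattice[OF c(1)] by blast
  then show ?thesis unfolding S'_def by blast
qed

lemma exists_injective_morphism_to_left_invertible_Q: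
  assumes S: "seed_datum r D S"
  shows "\<exists>S' A. seed_datum r D S' \<and> int_lin_morphism S S' A \<and> mat_injective A \<and>
    left_invertible (sd_Q S')"
proof -
  define m where "m = sd_dim S"
  have P: "sd_P S \<in> carrier_mat m r" and Q: "sd_Q S \<in> carrier_mat m r"
    using S unfolding seed_datum_def m_def by blast+
  define A :: "int mat" where "A = 1\<^sub>m m @\<^sub>r 0\<^sub>m r m"
  define P' where "P' = sd_P S @\<^sub>r 0\<^sub>m r r"
  define Q' :: "int mat" where "Q' = sd_Q S @\<^sub>r 1\<^sub>m r"
  have A: "A \<in> carrier_mat (m + r) m" and P': "P' \<in> carrier_mat (m + r) r"
    and Q': "Q' \<in> carrier_mat (m + r) r"
    using P Q by (auto simp: A_def P'_def Q'_def)
  have AP: "A * sd_P S = P'"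
    using P by (simp add: A_def P'_def append_rows_mult[of _ m m _ r _ r])
  have AQ: "transpose_mat A * Q' = sd_Q S"
    using Q by (simp add: A_def Q'_def transpose_append_rows_mult[of _ m m _ r _ r])
  have "left_invertible A"
    unfolding A_def by (intro left_invertible_append_rows_top left_invertible_one) auto
  then have "mat_injective A"
    using left_invertible_imp_injective_saturated by blast
  have "left_invertible Q'"
    unfolding Q'_def using Q by (intro left_invertible_append_rows_bottom left_invertible_one) auto
  then obtain Nb where S': "seed_datum r D \<lparr>sd_dim = m + r, sd_P = P', sd_Q = Q', sd_Nb = Nb\<rparr>"
    using exists_seed_datum_same_pairing[OF S P' Q'] left_invertible_col_nonzero[of Q'] Q'
      morphism_preserves_pairing[OF A P Q' AP AQ] by auto
  moreover have "int_lin_morphism S \<lparr>sd_dim = m + r, sd_P = P', sd_Q = Q', sd_Nb = Nb\<rparr> A"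
    unfolding int_lin_morphism_def using A AP AQ by (simp add: m_def)
  moreover have "left_invertible (sd_Q \<lparr>sd_dim = m + r, sd_P = P', sd_Q = Q', sd_Nb = Nb\<rparr>)"
    using \<open>left_invertible Q'\<close> by simp
  ultimately show ?thesis
    using \<open>mat_injective A\<close> by blast
qed

lemma exists_surjective_morphism_from_saturated_injective:
  assumes S': "seed_datum r D S'" and LQ: "left_invertible (sd_Q S')"
  shows "\<exists>S'' B. seed_datum r D S'' \<and> int_lin_morphism S'' S' B \<and> mat_surjective B \<and>
    saturated_injective S''"
proof -
  define n where "n = sd_dim S'"
  define P where "P = sd_P S'"
  define Q where "Q = sd_Q S'"
  have P: "P \<in> carrier_mat n r" and Q: "Q \<in> carrier_mat n r"
    using S' unfolding seed_datum_def n_def P_def Q_def by blast+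
  define B :: "int mat" where "B = transpose_mat (transpose_mat P @\<^sub>r 1\<^sub>m n)"
  define P'' :: "int mat" where "P'' = 1\<^sub>m r @\<^sub>r 0\<^sub>m n r"
  define Q'' where "Q'' = (transpose_mat P * Q) @\<^sub>r Q"
  have B: "B \<in> carrier_mat n (r + n)" and P'': "P'' \<in> carrier_mat (r + n) r"
    and Q'': "Q'' \<in> carrier_mat (r + n) r"
    using P Q by (auto simp: B_def P''_def Q''_def)
  have BP: "B * P'' = P"
    using P by (simp add: B_def P''_def transpose_append_rows_mult[of _ r n _ n _ r])
  have BQ: "transpose_mat B * Q = Q''"
    using P Q by (simp add: B_def Q''_def append_rows_mult[of _ r n _ n _ r])
  have "B * (0\<^sub>m r n @\<^sub>r 1\<^sub>m n) = 1\<^sub>m n"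
    using P by (simp add: B_def transpose_append_rows_mult[of _ r n _ n _ n])
  then have "mat_surjective B"
    using B by (intro right_invertible_imp_surjective[of _ n "r + n"]) auto
  have "left_invertible P''"
    unfolding P''_def by (intro left_invertible_append_rows_top left_invertible_one) auto
  moreover have "left_invertible Q''"
    unfolding Q''_def using P Q LQ
    by (intro left_invertible_append_rows_bottom[of _ r r _ n]) (auto simp: Q_def)
  ultimately have si:
    "saturated_injective \<lparr>sd_dim = r + n, sd_P = P'', sd_Q = Q'', sd_Nb = Nb\<rparr>" for Nb
    unfolding saturated_injective_def using left_invertible_imp_injective_saturated by simp
  obtain Nb where S'': "seed_datum r D \<lparr>sd_dim = r + n, sd_P = P'', sd_Q = Q'', sd_Nb = Nb\<rparr>"
    using exists_seed_datum_same_pairing[OF S' P'' Q''] left_invertible_col_nonzero[of Q''] Q''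
      \<open>left_invertible Q''\<close> morphism_preserves_pairing[OF B P'' Q BP BQ]
    by (auto simp: P_def Q_def)
  moreover have "int_lin_morphism \<lparr>sd_dim = r + n, sd_P = P'', sd_Q = Q'', sd_Nb = Nb\<rparr> S' B"
    unfolding int_lin_morphism_def using B BP BQ by (simp add: n_def P_def Q_def)
  ultimately show ?thesis
    using si \<open>mat_surjective B\<close> by blast
qed

theorem mainTheorem16:
  fixes r :: nat and D :: "rat list" and S :: seed
  assumes "seed_datum r D S"
  shows "\<exists>S' S'' A B. seed_datum r D S' \<and> seed_datum r D S'' \<and>
           int_lin_morphism S S' A \<and> int_lin_morphism S'' S' B \<and>
           mat_injective A \<and> mat_surjective B \<and> saturated_injective S''"
proof -
  obtain S' A where S': "seed_datum r D S'" "int_lin_morphism S S' A" "mat_injective A"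
    and "left_invertible (sd_Q S')"
    using exists_injective_morphism_to_left_invertible_Q[OF assms] by blast
  then obtain S'' B where "seed_datum r D S''" "int_lin_morphism S'' S' B" "mat_surjective B"
    "saturated_injective S''"
    using exists_surjective_morphism_from_saturated_injective by blast
  with S' show ?thesis by blast
qed

end
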